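(* Let $R$ be a commutative ring with identity and $a\in R$. The functor $a\Gamma_a: R\text{-Mod}\to R\text{-Mod}$, $M\mapsto a\Gamma_a(M)$, is a radical: for every $R$-module homomorphism $f:M\to N$ one has $f(a\Gamma_a(M))\subseteq a\Gamma_a(N)$, and for every $R$-module $M$ one has $a\Gamma_a(M/a\Gamma_a(M))=0$.
   Context: For an $R$-module $M$ and $a\in R$: $\Gamma_{a}(M)=\{m\in M \mid a^{k}m=0 \text{ for some } k\in\mathbb{Z}^{+}\}$ and $a\Gamma_{a}(M)=\{am \mid m\in \Gamma_a(M)\}$ (a submodule of $M$). A functor $\gamma$ assigning to each module $M$ a submodule $\gamma(M)$ is a preradical if $f(\gamma(M))\subseteq\gamma(N)$ for all homomorphisms $f:M\to N$, and a radical if moreover $\gamma(M/\gamma(M))=0$ for all $M$. *)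

theory Defs
  imports "HOL-Algebra.Module" "HOL-Algebra.AbelCoset"
begin

definition module_hom ::
  "('a, 'r) ring_scheme \<Rightarrow> ('a, 'b, 'm) module_scheme \<Rightarrow> ('a, 'c, 'n) module_scheme
   \<Rightarrow> ('b \<Rightarrow> 'c) set" where
  "module_hom R M N = {f. f \<in> carrier M \<rightarrow> carrier N \<and>
     (\<forall>x\<in>carrier M. \<forall>y\<in>carrier M. f (x \<oplus>\<^bsub>M\<^esub> y) = f x \<oplus>\<^bsub>N\<^esub> f y) \<and>
     (\<forall>r\<in>carrier R. \<forall>x\<in>carrier M. f (r \<odot>\<^bsub>M\<^esub> x) = r \<odot>\<^bsub>N\<^esub> f x)}"

definition Gamma ::
  "('a, 'r) ring_scheme \<Rightarrow> ('a, 'b, 'm) module_scheme \<Rightarrow> 'a \<Rightarrow> 'b set" where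
  "Gamma R M a = {m \<in> carrier M. \<exists>k::nat. k > 0 \<and> (a [^]\<^bsub>R\<^esub> k) \<odot>\<^bsub>M\<^esub> m = \<zero>\<^bsub>M\<^esub>}"

definition aGamma ::
  "('a, 'r) ring_scheme \<Rightarrow> ('a, 'b, 'm) module_scheme \<Rightarrow> 'a \<Rightarrow> 'b set" where
  "aGamma R M a = (\<lambda>m. a \<odot>\<^bsub>M\<^esub> m) ` Gamma R M a"

text \<open>The ring-multiplication and one
  fields of the HOL-Algebra module record are irrelevant for modules and set trivially.\<close>
definition quot_module ::
  "('a, 'r) ring_scheme \<Rightarrow> ('a, 'b, 'm) module_scheme \<Rightarrow> 'b set \<Rightarrow> ('a, 'b set) module" where
  "quot_module R M K =
     \<lparr> carrier = a_rcosets\<^bsub>M\<^esub> K,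
       mult = (\<lambda>X Y. K), one = K, zero = K,
       add = set_add M,
       smult = (\<lambda>r X. K <+>\<^bsub>M\<^esub> ((\<lambda>x. r \<odot>\<^bsub>M\<^esub> x) ` X)) \<rparr>"

end

theory Submission
  imports Defs
begin

text \<open>Since R is commutative, multiplication by a is R-linear, so \<open>a\<Gamma>\<^sub>a(M)\<close> is a submodule
  and homomorphisms, which preserve annihilation by powers of a, preserve it. For the quotient
  Q = M / \<open>a\<Gamma>\<^sub>a(M)\<close>: if the coset of x lies in \<open>\<Gamma>\<^sub>a(Q)\<close>, then \<open>a\<^sup>k x \<in> a\<Gamma>\<^sub>a(M) \<subseteq> \<Gamma>\<^sub>a(M)\<close>,
  hence x itself lies in \<open>\<Gamma>\<^sub>a(M)\<close>, so a x lies in \<open>a\<Gamma>\<^sub>a(M)\<close> and a times the coset is zero.\<close>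

context module
begin

lemma smult_comm:
  "\<lbrakk>r \<in> carrier R; s \<in> carrier R; x \<in> carrier M\<rbrakk> \<Longrightarrow>
    r \<odot>\<^bsub>M\<^esub> (s \<odot>\<^bsub>M\<^esub> x) = s \<odot>\<^bsub>M\<^esub> (r \<odot>\<^bsub>M\<^esub> x)"
  by (metis R.m_comm smult_assoc1)

lemma smult_nat_pow_add:
  "\<lbrakk>a \<in> carrier R; x \<in> carrier M\<rbrakk> \<Longrightarrow>
    (a [^]\<^bsub>R\<^esub> (i + j :: nat)) \<odot>\<^bsub>M\<^esub> x = (a [^]\<^bsub>R\<^esub> i) \<odot>\<^bsub>M\<^esub> ((a [^]\<^bsub>R\<^esub> j) \<odot>\<^bsub>M\<^esub> x)"
  by (simp add: smult_assoc1[symmetric] R.nat_pow_mult)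

lemma smult_image_submodule:
  assumes H: "submodule H R M" and a: "a \<in> carrier R"
  shows "submodule ((\<lambda>x. a \<odot>\<^bsub>M\<^esub> x) ` H) R M"
proof (rule submoduleI)
  note H_closed = submoduleE[OF H]
  show "(\<lambda>x. a \<odot>\<^bsub>M\<^esub> x) ` H \<subseteq> carrier M"
    using H_closed(1) a by auto
  show "\<zero>\<^bsub>M\<^esub> \<in> (\<lambda>x. a \<odot>\<^bsub>M\<^esub> x) ` H"
    using submodule.axioms(1)[OF H] a
    by (force intro: image_eqI[of _ _ "\<zero>\<^bsub>M\<^esub>"] subgroup.one_closed)
  show "\<ominus>\<^bsub>M\<^esub> y \<in> (\<lambda>x. a \<odot>\<^bsub>M\<^esub> x) ` H" if "y \<in> (\<lambda>x. a \<odot>\<^bsub>M\<^esub> x) ` H" for y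
    using that H_closed(1,3) a by (auto simp: smult_r_minus[symmetric] subset_iff)
  show "y \<oplus>\<^bsub>M\<^esub> z \<in> (\<lambda>x. a \<odot>\<^bsub>M\<^esub> x) ` H"
    if "y \<in> (\<lambda>x. a \<odot>\<^bsub>M\<^esub> x) ` H" "z \<in> (\<lambda>x. a \<odot>\<^bsub>M\<^esub> x) ` H" for y z
    using that H_closed(1,5) a by (auto simp: smult_r_distr[symmetric] subset_iff)
  show "r \<odot>\<^bsub>M\<^esub> y \<in> (\<lambda>x. a \<odot>\<^bsub>M\<^esub> x) ` H"
    if "r \<in> carrier R" "y \<in> (\<lambda>x. a \<odot>\<^bsub>M\<^esub> x) ` H" for r y
    using that H_closed(1,4) a by (auto simp: smult_comm subset_iff)
qed

lemma Gamma_submodule: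
  assumes a: "a \<in> carrier R"
  shows "submodule (Gamma R M a) R M"
proof (rule submoduleI)
  show "Gamma R M a \<subseteq> carrier M"
    unfolding Gamma_def by auto
  show "\<zero>\<^bsub>M\<^esub> \<in> Gamma R M a"
    unfolding Gamma_def using a by (auto intro: exI[of _ 1])
  show "\<ominus>\<^bsub>M\<^esub> x \<in> Gamma R M a" if "x \<in> Gamma R M a" for x
    using that a unfolding Gamma_def by (auto simp: smult_r_minus)
  show "x \<oplus>\<^bsub>M\<^esub> y \<in> Gamma R M a" if x: "x \<in> Gamma R M a" and y: "y \<in> Gamma R M a" for x y
  proof -
    obtain i :: nat where i: "i > 0" "(a [^]\<^bsub>R\<^esub> i) \<odot>\<^bsub>M\<^esub> x = \<zero>\<^bsub>M\<^esub>" and xM: "x \<in> carrier M"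
      using x unfolding Gamma_def by auto
    obtain j :: nat where j: "j > 0" "(a [^]\<^bsub>R\<^esub> j) \<odot>\<^bsub>M\<^esub> y = \<zero>\<^bsub>M\<^esub>" and yM: "y \<in> carrier M"
      using y unfolding Gamma_def by auto
    have "(a [^]\<^bsub>R\<^esub> (j + i)) \<odot>\<^bsub>M\<^esub> x = \<zero>\<^bsub>M\<^esub>" "(a [^]\<^bsub>R\<^esub> (i + j)) \<odot>\<^bsub>M\<^esub> y = \<zero>\<^bsub>M\<^esub>"
      using i j a xM yM by (simp_all add: smult_nat_pow_add)
    then show ?thesis
      unfolding Gamma_def using i j a xM yM
      by (auto simp: smult_r_distr add.commute[of j i] intro!: exI[of _ "i + j"])
  qed
  show "r \<odot>\<^bsub>M\<^esub> x \<in> Gamma R M a" if "r \<in> carrier R" "x \<in> Gamma R M a" for r x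
    using that a unfolding Gamma_def by (auto simp: smult_comm[of _ r])
qed

lemma aGamma_submodule: "a \<in> carrier R \<Longrightarrow> submodule (aGamma R M a) R M"
  unfolding aGamma_def by (intro smult_image_submodule Gamma_submodule)

lemma aGamma_subset_Gamma: "a \<in> carrier R \<Longrightarrow> aGamma R M a \<subseteq> Gamma R M a"
  unfolding aGamma_def using submodule.smult_closed[OF Gamma_submodule] by blast

lemma Gamma_nat_pow_smultD:
  assumes a: "a \<in> carrier R" and x: "x \<in> carrier M"
    and ax: "(a [^]\<^bsub>R\<^esub> (k :: nat)) \<odot>\<^bsub>M\<^esub> x \<in> Gamma R M a"
  shows "x \<in> Gamma R M a"
proof -
  obtain j :: nat where "j > 0" "(a [^]\<^bsub>R\<^esub> j) \<odot>\<^bsub>M\<^esub> ((a [^]\<^bsub>R\<^esub> k) \<odot>\<^bsub>M\<^esub> x) = \<zero>\<^bsub>M\<^esub>"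
    using ax unfolding Gamma_def by auto
  then show ?thesis
    unfolding Gamma_def using a x by (auto simp: smult_nat_pow_add intro!: exI[of _ "j + k"])
qed

lemma quot_module_smult_coset:
  assumes K: "submodule K R M" and r: "r \<in> carrier R" and x: "x \<in> carrier M"
  shows "smult (quot_module R M K) r (K +>\<^bsub>M\<^esub> x) = K +>\<^bsub>M\<^esub> (r \<odot>\<^bsub>M\<^esub> x)"
proof -
  note K_closed = submoduleE[OF K]
  have "K <+>\<^bsub>M\<^esub> (\<lambda>y. r \<odot>\<^bsub>M\<^esub> y) ` (K +>\<^bsub>M\<^esub> x) = K +>\<^bsub>M\<^esub> (r \<odot>\<^bsub>M\<^esub> x)"
  proof (intro equalityI subsetI)
    fix y assume "y \<in> K <+>\<^bsub>M\<^esub> (\<lambda>y. r \<odot>\<^bsub>M\<^esub> y) ` (K +>\<^bsub>M\<^esub> x)"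
    then obtain k l where kl: "k \<in> K" "l \<in> K" "y = k \<oplus>\<^bsub>M\<^esub> r \<odot>\<^bsub>M\<^esub> (l \<oplus>\<^bsub>M\<^esub> x)"
      unfolding set_add_def' a_r_coset_def' by blast
    then have "y = (k \<oplus>\<^bsub>M\<^esub> r \<odot>\<^bsub>M\<^esub> l) \<oplus>\<^bsub>M\<^esub> r \<odot>\<^bsub>M\<^esub> x"
      using K_closed(1) r x by (auto simp: smult_r_distr M.add.m_assoc subset_iff)
    moreover have "k \<oplus>\<^bsub>M\<^esub> r \<odot>\<^bsub>M\<^esub> l \<in> K"
      using kl r K_closed(4,5) by blast
    ultimately show "y \<in> K +>\<^bsub>M\<^esub> (r \<odot>\<^bsub>M\<^esub> x)"
      unfolding a_r_coset_def' by blast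
  next
    fix y assume "y \<in> K +>\<^bsub>M\<^esub> (r \<odot>\<^bsub>M\<^esub> x)"
    then obtain k where "k \<in> K" "y = k \<oplus>\<^bsub>M\<^esub> r \<odot>\<^bsub>M\<^esub> (\<zero>\<^bsub>M\<^esub> \<oplus>\<^bsub>M\<^esub> x)"
      unfolding a_r_coset_def' using x by auto
    then show "y \<in> K <+>\<^bsub>M\<^esub> (\<lambda>y. r \<odot>\<^bsub>M\<^esub> y) ` (K +>\<^bsub>M\<^esub> x)"
      unfolding set_add_def' a_r_coset_def'
      using submodule.axioms(1)[OF K] subgroup.one_closed by fastforce
  qed
  then show ?thesis
    by (simp add: quot_module_def)
qed

lemma aGamma_quot_module_aGamma:
  assumes a: "a \<in> carrier R"
  shows "aGamma R (quot_module R M (aGamma R M a)) a = {\<zero>\<^bsub>quot_module R M (aGamma R M a)\<^esub>}"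
proof -
  let ?K = "aGamma R M a" and ?Q = "quot_module R M (aGamma R M a)"
  have K: "submodule ?K R M"
    by (rule aGamma_submodule[OF a])
  have coset_eq_K: "?K +>\<^bsub>M\<^esub> x = ?K \<longleftrightarrow> x \<in> ?K" if "x \<in> carrier M" for x
    using that submodule.axioms(1)[OF K] a_coset_join1 a_coset_join2 by blast
  have zero_Q: "\<zero>\<^bsub>?Q\<^esub> = ?K" and carrier_Q: "carrier ?Q = a_rcosets\<^bsub>M\<^esub> ?K"
    by (simp_all add: quot_module_def)
  have "\<zero>\<^bsub>M\<^esub> \<in> ?K"
    using submodule.axioms(1)[OF K] subgroup.one_closed by force
  then have K_coset: "?K = ?K +>\<^bsub>M\<^esub> \<zero>\<^bsub>M\<^esub>"
    using coset_eq_K[OF M.zero_closed] by simp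
  show ?thesis
  proof (intro equalityI subsetI)
    fix X assume "X \<in> aGamma R ?Q a"
    then obtain Y where Y: "X = smult ?Q a Y" "Y \<in> Gamma R ?Q a"
      unfolding aGamma_def[of R ?Q] by blast
    then obtain k :: nat where "Y \<in> carrier ?Q" "smult ?Q (a [^]\<^bsub>R\<^esub> k) Y = ?K"
      unfolding Gamma_def[of R ?Q] zero_Q by blast
    moreover obtain x where x: "x \<in> carrier M" "Y = ?K +>\<^bsub>M\<^esub> x"
      using \<open>Y \<in> carrier ?Q\<close> unfolding carrier_Q A_RCOSETS_def' by blast
    ultimately have "?K +>\<^bsub>M\<^esub> ((a [^]\<^bsub>R\<^esub> k) \<odot>\<^bsub>M\<^esub> x) = ?K"
      using quot_module_smult_coset[OF K] a by simp
    then have "(a [^]\<^bsub>R\<^esub> k) \<odot>\<^bsub>M\<^esub> x \<in> Gamma R M a"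
      using coset_eq_K aGamma_subset_Gamma a x(1) by auto
    then have "a \<odot>\<^bsub>M\<^esub> x \<in> ?K"
      unfolding aGamma_def using Gamma_nat_pow_smultD a x(1) by blast
    then show "X \<in> {\<zero>\<^bsub>?Q\<^esub>}"
      using Y(1) x quot_module_smult_coset[OF K a] coset_eq_K a zero_Q by simp
  next
    have smult_K: "smult ?Q r ?K = ?K" if "r \<in> carrier R" for r
      using quot_module_smult_coset[OF K that M.zero_closed] K_coset that by simp
    have "?K \<in> Gamma R ?Q a"
      unfolding Gamma_def zero_Q carrier_Q A_RCOSETS_def'
      using smult_K a K_coset by (auto intro!: exI[of _ 1])
    then show "X \<in> aGamma R ?Q a" if "X \<in> {\<zero>\<^bsub>?Q\<^esub>}" for X
      using that smult_K[OF a] zero_Q unfolding aGamma_def by force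
  qed
qed

lemma module_hom_zero:
  assumes N: "module R N" and f: "f \<in> module_hom R M N"
  shows "f \<zero>\<^bsub>M\<^esub> = \<zero>\<^bsub>N\<^esub>"
proof -
  have "f \<zero>\<^bsub>M\<^esub> = f (\<zero>\<^bsub>R\<^esub> \<odot>\<^bsub>M\<^esub> \<zero>\<^bsub>M\<^esub>)"
    by simp
  also have "\<dots> = \<zero>\<^bsub>R\<^esub> \<odot>\<^bsub>N\<^esub> f \<zero>\<^bsub>M\<^esub>"
    using f unfolding module_hom_def by blast
  also have "\<dots> = \<zero>\<^bsub>N\<^esub>"
    using f module.smult_l_null[OF N] unfolding module_hom_def by auto
  finally show ?thesis .
qed

lemma module_hom_Gamma:
  assumes N: "module R N" and f: "f \<in> module_hom R M N" and a: "a \<in> carrier R"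
  shows "f ` Gamma R M a \<subseteq> Gamma R N a"
proof
  fix y assume "y \<in> f ` Gamma R M a"
  then obtain x and k :: nat where y: "y = f x" and x: "x \<in> carrier M"
    and k: "k > 0" "(a [^]\<^bsub>R\<^esub> k) \<odot>\<^bsub>M\<^esub> x = \<zero>\<^bsub>M\<^esub>"
    unfolding Gamma_def by auto
  have "(a [^]\<^bsub>R\<^esub> k) \<odot>\<^bsub>N\<^esub> f x = f ((a [^]\<^bsub>R\<^esub> k) \<odot>\<^bsub>M\<^esub> x)"
    using f x a unfolding module_hom_def by simp
  also have "\<dots> = \<zero>\<^bsub>N\<^esub>"
    using k(2) module_hom_zero[OF N f] by simp
  finally show "y \<in> Gamma R N a"
    using f x k(1) y unfolding Gamma_def module_hom_def by auto
qed

lemma module_hom_aGamma: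
  assumes N: "module R N" and f: "f \<in> module_hom R M N" and a: "a \<in> carrier R"
  shows "f ` aGamma R M a \<subseteq> aGamma R N a"
proof
  fix y assume "y \<in> f ` aGamma R M a"
  then obtain x where "y = f (a \<odot>\<^bsub>M\<^esub> x)" and x: "x \<in> Gamma R M a"
    unfolding aGamma_def by auto
  then have "y = a \<odot>\<^bsub>N\<^esub> f x"
    using f a submoduleE(1)[OF Gamma_submodule[OF a]] unfolding module_hom_def by auto
  then show "y \<in> aGamma R N a"
    using module_hom_Gamma[OF N f a] x unfolding aGamma_def by blast
qed

end

theorem mainTheorem6:
  fixes R :: "('a, 'r) ring_scheme" and a :: 'a
  assumes "cring R" and "a \<in> carrier R"
  shows "(\<forall>(M :: ('a, 'b) module) (N :: ('a, 'c) module) f.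
            module R M \<and> module R N \<and> f \<in> module_hom R M N \<longrightarrow>
            f ` aGamma R M a \<subseteq> aGamma R N a)
       \<and> (\<forall>M :: ('a, 'b) module. module R M \<longrightarrow>
            aGamma R (quot_module R M (aGamma R M a)) a
              = {\<zero>\<^bsub>quot_module R M (aGamma R M a)\<^esub>})"
  using module.module_hom_aGamma[OF _ _ _ assms(2)] module.aGamma_quot_module_aGamma[OF _ assms(2)]
  by blast

end
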